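(* Fix $k\ge 1$ and a length $T$, and call a binary signal of length $T$ admissible if it contains no more than $k$ consecutive $0$ bits. An admissible signal is minimal if and only if every $1$ bit of the signal is surrounded by at least $k$ $0$ bits, i.e. if a $1$ bit is immediately preceded by exactly $p$ consecutive $0$ bits and immediately succeeded by exactly $q$ consecutive $0$ bits, then $p+q\ge k$.
   Context: Partial order: $\sigma_1\preceq\sigma_2$ if for every $i$ with $\sigma_1(i)=1$ we also have $\sigma_2(i)=1$. An admissible signal $\sigma$ is minimal if there is no other admissible signal $\bar\sigma\neq\sigma$ of the same length with $\bar\sigma\preceq\sigma$. *)

theory Defs
  imports Main
begin

text \<open>A binary signal of length T is a bool list of length T (True = bit 1, False = bit 0).\<close>

definition admissible :: "nat \<Rightarrow> bool list \<Rightarrow> bool" where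
  "admissible k xs \<longleftrightarrow>
     \<not> (\<exists>i. i + k < length xs \<and> (\<forall>j. i \<le> j \<and> j \<le> i + k \<longrightarrow> \<not> xs ! j))"

definition sig_le :: "bool list \<Rightarrow> bool list \<Rightarrow> bool" where
  "sig_le s1 s2 \<longleftrightarrow> (\<forall>i < length s1. s1 ! i \<longrightarrow> s2 ! i)"

definition minimal_admissible :: "nat \<Rightarrow> bool list \<Rightarrow> bool" where
  "minimal_admissible k s \<longleftrightarrow> admissible k s \<and>
     \<not> (\<exists>s'. length s' = length s \<and> admissible k s' \<and> s' \<noteq> s \<and> sig_le s' s)"

definition zeros_before :: "bool list \<Rightarrow> nat \<Rightarrow> nat" where
  "zeros_before xs i = length (takeWhile Not (rev (take i xs)))"

definition zeros_after :: "bool list \<Rightarrow> nat \<Rightarrow> nat" where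
  "zeros_after xs i = length (takeWhile Not (drop (Suc i) xs))"

end

theory Submission
  imports Defs
begin

text \<open>Admissibility is preserved when bits are switched on, so an admissible signal is minimal
  iff switching off any single 1 bit destroys admissibility. Switching off the 1 at position i
  fuses it with the p zeros before and the q zeros after it into a run of p + q + 1 zeros and
  leaves every other zero run of the (admissible) signal untouched; hence the result is admissible
  iff p + q + 1 \<le> k.\<close>

lemma le_length_takeWhile_iff:
  "n \<le> length (takeWhile P xs) \<longleftrightarrow> (\<forall>j < n. j < length xs \<and> P (xs ! j))"
proof
  assume n: "n \<le> length (takeWhile P xs)"
  show "\<forall>j < n. j < length xs \<and> P (xs ! j)"
  proof (intro allI impI)
    fix j assume "j < n"
    with n have j: "j < length (takeWhile P xs)" by simp
    then have "takeWhile P xs ! j \<in> set (takeWhile P xs)" by (rule nth_mem)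
    then show "j < length xs \<and> P (xs ! j)"
      using j takeWhile_nth[OF j] length_takeWhile_le[of P xs] set_takeWhileD by fastforce
  qed
next
  assume "\<forall>j < n. j < length xs \<and> P (xs ! j)"
  then show "n \<le> length (takeWhile P xs)"
    using length_takeWhile_less_P_nth[of n P xs] by (cases n) auto
qed

lemma le_zeros_after_iff:
  "n \<le> zeros_after xs i \<longleftrightarrow> (\<forall>j \<in> {i<..i + n}. j < length xs \<and> \<not> xs ! j)"
proof -
  have "n \<le> zeros_after xs i \<longleftrightarrow> (\<forall>l < n. Suc i + l < length xs \<and> \<not> xs ! (Suc i + l))"
    unfolding zeros_after_def le_length_takeWhile_iff by auto
  also have "\<dots> \<longleftrightarrow> (\<forall>j \<in> {i<..i + n}. j < length xs \<and> \<not> xs ! j)"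
  proof safe
    fix j assume "\<forall>l < n. Suc i + l < length xs \<and> \<not> xs ! (Suc i + l)" "j \<in> {i<..i + n}"
    moreover from \<open>j \<in> {i<..i + n}\<close> have "j - Suc i < n" "Suc i + (j - Suc i) = j" by auto
    ultimately show "j < length xs" "xs ! j \<Longrightarrow> False" by metis+
  next
    fix l assume "\<forall>j \<in> {i<..i + n}. j < length xs \<and> \<not> xs ! j" "l < n"
    moreover from \<open>l < n\<close> have "Suc i + l \<in> {i<..i + n}" by simp
    ultimately show "Suc i + l < length xs" "xs ! (Suc i + l) \<Longrightarrow> False" by blast+
  qed
  finally show ?thesis .
qed

lemma le_zeros_before_iff:
  assumes "i \<le> length xs"
  shows "n \<le> zeros_before xs i \<longleftrightarrow> n \<le> i \<and> (\<forall>j \<in> {i - n..<i}. \<not> xs ! j)"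
proof -
  have "n \<le> zeros_before xs i \<longleftrightarrow> (\<forall>l < n. l < i \<and> \<not> xs ! (i - Suc l))"
    unfolding zeros_before_def le_length_takeWhile_iff using assms by (auto simp: rev_nth)
  also have "\<dots> \<longleftrightarrow> n \<le> i \<and> (\<forall>j \<in> {i - n..<i}. \<not> xs ! j)"
  proof safe
    assume "\<forall>l < n. l < i \<and> \<not> xs ! (i - Suc l)"
    then show "n \<le> i" by (cases n) auto
  next
    fix j assume "\<forall>l < n. l < i \<and> \<not> xs ! (i - Suc l)" "j \<in> {i - n..<i}" "xs ! j"
    moreover from \<open>j \<in> {i - n..<i}\<close> have "i - Suc j < n" "i - Suc (i - Suc j) = j" by auto
    ultimately show False by metis
  next
    fix l assume "n \<le> i" "\<forall>j \<in> {i - n..<i}. \<not> xs ! j" "l < n"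
    moreover from \<open>n \<le> i\<close> \<open>l < n\<close> have "i - Suc l \<in> {i - n..<i}" by auto
    ultimately show "l < i" "xs ! (i - Suc l) \<Longrightarrow> False" by auto
  qed
  finally show ?thesis .
qed

lemma not_admissible_list_update_False:
  assumes i: "i < length xs" and long: "k \<le> zeros_before xs i + zeros_after xs i"
  shows "\<not> admissible k (xs[i := False])"
proof -
  let ?p = "zeros_before xs i" and ?q = "zeros_after xs i"
  have before: "?p \<le> i" "\<forall>j \<in> {i - ?p..<i}. \<not> xs ! j"
    using le_zeros_before_iff[of i xs ?p] i by simp_all
  have after: "\<forall>j \<in> {i<..i + ?q}. j < length xs \<and> \<not> xs ! j"
    using le_zeros_after_iff[of ?q xs i] by simp
  have "i + ?q < length xs"
    using after i by (cases ?q) auto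
  with long before(1) have "i - ?p + k < length xs" by linarith
  moreover have "\<not> xs[i := False] ! j" if "i - ?p \<le> j" "j \<le> i - ?p + k" for j
  proof (cases j i rule: linorder_cases)
    case less
    then show ?thesis using before(2) that(1) by simp
  next
    case equal
    then show ?thesis using i by simp
  next
    case greater
    then have "j \<in> {i<..i + ?q}" using that(2) before(1) long by simp
    then show ?thesis using after greater by simp
  qed
  ultimately show ?thesis
    unfolding admissible_def length_list_update by blast
qed

lemma admissible_list_update_False:
  assumes adm: "admissible k xs" and i: "i < length xs"
    and short: "zeros_before xs i + zeros_after xs i < k"
  shows "admissible k (xs[i := False])"
  unfolding admissible_def
proof
  assume "\<exists>a. a + k < length (xs[i := False]) \<and>
    (\<forall>j. a \<le> j \<and> j \<le> a + k \<longrightarrow> \<not> xs[i := False] ! j)"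
  then obtain a where a: "a + k < length xs"
    and zero: "\<And>j. a \<le> j \<Longrightarrow> j \<le> a + k \<Longrightarrow> \<not> xs[i := False] ! j" by auto
  show False
  proof (cases "a \<le> i \<and> i \<le> a + k")
    case False
    then have "\<not> xs ! j" if "a \<le> j" "j \<le> a + k" for j
      using zero[OF that] that by auto
    with a adm show False unfolding admissible_def by blast
  next
    case True
    have zero_xs: "\<not> xs ! j" if "a \<le> j" "j \<le> a + k" "j \<noteq> i" for j
      using zero[OF that(1,2)] that(3) by simp
    have "\<forall>j \<in> {i - (i - a)..<i}. \<not> xs ! j"
      using zero_xs True by (simp add: le_diff_conv2)
    then have "i - a \<le> zeros_before xs i"
      using le_zeros_before_iff[of i xs "i - a"] i by simp
    moreover have "\<forall>j \<in> {i<..i + (a + k - i)}. j < length xs \<and> \<not> xs ! j"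
      using zero_xs True a by simp
    then have "a + k - i \<le> zeros_after xs i"
      using le_zeros_after_iff by blast
    ultimately show False using short True by linarith
  qed
qed

lemma admissible_list_update_False_iff:
  assumes "admissible k xs" and "i < length xs"
  shows "admissible k (xs[i := False]) \<longleftrightarrow> zeros_before xs i + zeros_after xs i < k"
  using assms admissible_list_update_False not_admissible_list_update_False not_less by blast

lemma admissible_sig_le_mono:
  "admissible k s' \<Longrightarrow> length s' = length s \<Longrightarrow> sig_le s' s \<Longrightarrow> admissible k s"
  unfolding admissible_def sig_le_def by (metis le_less_trans)

lemma minimal_admissible_iff_clearing_breaks:
  assumes adm: "admissible k s"
  shows "minimal_admissible k s \<longleftrightarrow>
    (\<forall>i < length s. s ! i \<longrightarrow> \<not> admissible k (s[i := False]))"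
proof
  assume "minimal_admissible k s"
  moreover have "sig_le (s[i := False]) s" for i
    unfolding sig_le_def by (metis length_list_update nth_list_update_eq nth_list_update_neq)
  moreover have "s[i := False] \<noteq> s" if "i < length s" "s ! i" for i
    using that by (metis nth_list_update_eq)
  ultimately show "\<forall>i < length s. s ! i \<longrightarrow> \<not> admissible k (s[i := False])"
    unfolding minimal_admissible_def by auto
next
  assume breaks: "\<forall>i < length s. s ! i \<longrightarrow> \<not> admissible k (s[i := False])"
  show "minimal_admissible k s"
    unfolding minimal_admissible_def
  proof (intro conjI notI adm)
    assume "\<exists>s'. length s' = length s \<and> admissible k s' \<and> s' \<noteq> s \<and> sig_le s' s"
    then obtain s' where s': "length s' = length s" "admissible k s'" "s' \<noteq> s" "sig_le s' s"
      by blast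
    obtain i where i: "i < length s" "s' ! i \<noteq> s ! i"
      using s'(1,3) nth_equalityI[of s' s] by auto
    with s' have "s ! i" "\<not> s' ! i" unfolding sig_le_def by auto
    have "sig_le s' (s[i := False])"
      using s'(1,4) i(1) \<open>\<not> s' ! i\<close> unfolding sig_le_def by (auto simp: nth_list_update)
    then have "admissible k (s[i := False])"
      using admissible_sig_le_mono s' by simp
    with breaks i \<open>s ! i\<close> show False by blast
  qed
qed

theorem mainTheorem7:
  fixes k T :: nat and \<sigma> :: "bool list"
  assumes "k \<ge> 1" and "length \<sigma> = T" and "admissible k \<sigma>"
  shows "minimal_admissible k \<sigma> \<longleftrightarrow>
    (\<forall>i < T. \<sigma> ! i \<longrightarrow> zeros_before \<sigma> i + zeros_after \<sigma> i \<ge> k)"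
  using assms(2,3)
  by (auto simp: minimal_admissible_iff_clearing_breaks admissible_list_update_False_iff not_less)

end
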